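(* Let $\underline{T}=(T_1,\ldots,T_n)$ be a spherical unitary on a Hilbert space $\mathcal{H}$, i.e. $T_iT_j=T_jT_i$ for all $i,j$, each $T_i$ is normal, and $\sum_{i=1}^nT_iT_i^*=I$. Let $\tilde{\underline{V}}$ on $\tilde{\mathcal{H}}\supseteq\mathcal{H}$ be the minimal isometric dilation of $\underline{T}$. Then the maximal commuting piece of $\tilde{\underline{V}}$ is $\underline{T}$, i.e. $\tilde{\mathcal{H}}^c(\tilde{\underline{V}})=\mathcal{H}$ and $\tilde V_i^c=T_i$ for all $i$.
   Context: Notation: $\Lambda=\{1,\ldots,n\}$, $\tilde\Lambda=\bigcup_{m\ge0}\Lambda^m$; $\underline{R}^\alpha=R_{\alpha_1}\cdots R_{\alpha_m}$, $\underline{R}^0=I$. The minimal isometric dilation of a contractive tuple $\underline{T}$ on $\mathcal{H}$ is a tuple $\tilde{\underline{V}}$ of isometries with mutually orthogonal ranges on $\tilde{\mathcal{H}}\supseteq\mathcal{H}$ with $\tilde V_i^*h=T_i^*h$ for $h\in\mathcal{H}$ and $\overline{\mathrm{span}}\{\tilde{\underline{V}}^\alpha h:h\in\mathcal{H},\alpha\in\tilde\Lambda\}=\tilde{\mathcal{H}}$ (unique up to unitary equivalence fixing $\mathcal{H}$). Maximal commuting piece of a tuple $\underline{R}$ on $\mathcal{L}$: the largest closed subspace $\mathcal{L}^c(\underline{R})$ invariant under all $R_i^*$ on which $R_i^*R_j^*h=R_j^*R_i^*h$ for all $i,j$; $R_i^c=P_{\mathcal{L}^c(\underline{R})}R_i|_{\mathcal{L}^c(\underline{R})}$.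 *)

theory Defs
  imports "HOL-Analysis.Analysis"
begin

text \<open>A complex Hilbert space is modelled as a real Hilbert space (type class
  real_inner + complete_space) together with a complex structure J (multiplication
  by the imaginary unit): J is real-linear, J o J = -id and J preserves the real
  inner product. The complex inner product is then inner x y + i inner x (J y)
  (up to convention), and the real inner product is its real part.\<close>

definition cstruct :: "('a::real_inner \<Rightarrow> 'a) \<Rightarrow> bool" where
  "cstruct J \<longleftrightarrow> linear J \<and> (\<forall>x. J (J x) = - x) \<and> (\<forall>x y. inner (J x) (J y) = inner x y)"

definition cbounded :: "('a::real_normed_vector \<Rightarrow> 'a) \<Rightarrow> ('b::real_normed_vector \<Rightarrow> 'b)
    \<Rightarrow> ('a \<Rightarrow> 'b) \<Rightarrow> bool" where
  "cbounded J1 J2 T \<longleftrightarrow> bounded_linear T \<and> (\<forall>x. T (J1 x) = J2 (T x))"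

text \<open>Hilbert space adjoint (for complex-linear operators the real adjoint coincides
  with the complex adjoint).\<close>
definition adj :: "('a::real_inner \<Rightarrow> 'a) \<Rightarrow> ('a \<Rightarrow> 'a)" where
  "adj T = (THE S. \<forall>x y. inner (T x) y = inner x (S y))"

definition oproj :: "'a::real_inner set \<Rightarrow> 'a \<Rightarrow> 'a" where
  "oproj M x = (THE p. p \<in> M \<and> (\<forall>m\<in>M. inner (x - p) m = 0))"

fun opword :: "(nat \<Rightarrow> 'a \<Rightarrow> 'a) \<Rightarrow> nat list \<Rightarrow> 'a \<Rightarrow> 'a" where
  "opword R [] = id"
| "opword R (i # \<alpha>) = R i \<circ> opword R \<alpha>"

definition comm_inv :: "('a::real_inner \<Rightarrow> 'a) \<Rightarrow> (nat \<Rightarrow> 'a \<Rightarrow> 'a) \<Rightarrow> nat \<Rightarrow> 'a set \<Rightarrow> bool" where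
  "comm_inv J R n L \<longleftrightarrow> subspace L \<and> closed L \<and> J ` L \<subseteq> L
     \<and> (\<forall>i\<in>{1..n}. adj (R i) ` L \<subseteq> L)
     \<and> (\<forall>i\<in>{1..n}. \<forall>j\<in>{1..n}. \<forall>h\<in>L. adj (R i) (adj (R j) h) = adj (R j) (adj (R i) h))"

definition max_comm_space :: "('a::real_inner \<Rightarrow> 'a) \<Rightarrow> (nat \<Rightarrow> 'a \<Rightarrow> 'a) \<Rightarrow> nat \<Rightarrow> 'a set" where
  "max_comm_space J R n = (GREATEST L. comm_inv J R n L)"

end

theory Submission
  imports Defs
begin

text \<open>
  Let W embed H isometrically into the dilation space, with adjoint W*, and for a word \<alpha> over
  {1..n} write V_\<alpha>* for the corresponding product of adjoints. Put
  q_m(y) = \<Sum> |W* V_\<alpha>* y|^2, the sum ranging over the words of length m.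
  Then 0 \<le> q_m(y) \<le> |y|^2, and q_m(y) = |y|^2 for large m when y lies in the span of the
  vectors V_\<alpha> W h, which is dense by minimality. If y lies in a subspace that is invariant under
  the V_i* and on which they commute, the increments q_(m+1)(y) - q_m(y) are nondecreasing in m;
  this uses that a spherical unitary satisfies T_i* T_j = T_j T_i*. A bounded sequence with
  nondecreasing increments is nonincreasing, so |y|^2 \<le> q_0(y) = |W* y|^2, which forces y \<in> W H.
  Conversely V_i* W = W T_i* shows that W H is such a subspace and that the compression of V_i
  to W H is T_i.
\<close>

lemma inner_diff_self_of_projection:
  fixes y z :: "'a::real_inner"
  assumes "inner y z = inner z z"
  shows "inner (y - z) (y - z) = inner y y - inner z z"
  using assms by (simp add: inner_diff inner_commute)

lemma eq_if_inner_eq: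
  fixes x y :: "'a::real_inner"
  assumes "inner x x = c" and "inner y y = c" and "inner x y = c"
  shows "x = y"
proof -
  have "inner (x - y) (x - y) = 0"
    using assms by (simp add: inner_diff inner_commute)
  then show ?thesis by simp
qed

lemma sum_inner_diff_self:
  fixes a b :: "'i \<Rightarrow> 'a::real_inner"
  shows "(\<Sum>k\<in>I. inner (a k - b k) (a k - b k))
    = (\<Sum>k\<in>I. inner (a k) (a k)) - 2 * (\<Sum>k\<in>I. inner (a k) (b k)) + (\<Sum>k\<in>I. inner (b k) (b k))"
  by (simp add: inner_commute[of "b _" "a _"] sum.distrib sum_subtractf sum_distrib_left algebra_simps)

lemma eq_if_sum_inner_eq:
  fixes a b :: "'i \<Rightarrow> 'a::real_inner"
  assumes "finite I" and "k \<in> I"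
    and "(\<Sum>k\<in>I. inner (a k) (a k)) = c" and "(\<Sum>k\<in>I. inner (b k) (b k)) = c"
    and "(\<Sum>k\<in>I. inner (a k) (b k)) = c"
  shows "a k = b k"
proof -
  have "(\<Sum>k\<in>I. inner (a k - b k) (a k - b k)) = 0"
    using assms(3-5) by (simp add: sum_inner_diff_self)
  then have "inner (a k - b k) (a k - b k) = 0"
    using assms(1,2) by (simp add: sum_nonneg_eq_0_iff)
  then show ?thesis by simp
qed

lemma eq_if_double_sum_inner_eq:
  fixes a b :: "'i \<Rightarrow> 'j \<Rightarrow> 'a::real_inner"
  assumes "finite I" and "finite J" and "i \<in> I" and "j \<in> J"
    and "(\<Sum>i\<in>I. \<Sum>j\<in>J. inner (a i j) (a i j)) = c" and "(\<Sum>i\<in>I. \<Sum>j\<in>J. inner (b i j) (b i j)) = c"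
    and "(\<Sum>i\<in>I. \<Sum>j\<in>J. inner (a i j) (b i j)) = c"
  shows "a i j = b i j"
  using eq_if_sum_inner_eq[of "I \<times> J" "(i, j)" "case_prod a" c "case_prod b"] assms
  by (simp add: sum.cartesian_product')

lemma inner_isometry:
  fixes f :: "'a::real_inner \<Rightarrow> 'b::real_inner"
  assumes "linear f" and "\<And>x. norm (f x) = norm x"
  shows "inner (f x) (f y) = inner x y"
proof -
  have norm_sq: "inner (f u) (f u) = inner u u" for u
    by (metis assms(2) power2_norm_eq_inner)
  have "inner (f x + f y) (f x + f y) = inner (x + y) (x + y)"
    using norm_sq[of "x + y"] linear_add[OF assms(1)] by simp
  then show ?thesis using norm_sq[of x] norm_sq[of y] by (simp add: inner_add inner_commute)
qed

lemma Cauchy_if_norm_diff_le: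
  fixes X :: "nat \<Rightarrow> 'a::real_normed_vector"
  assumes le: "\<And>k l. (norm (X k - X l))\<^sup>2 \<le> d k + d l" and d: "d \<longlonglongrightarrow> 0"
  shows "Cauchy X"
proof (rule CauchyI)
  fix e :: real assume "0 < e"
  then obtain N where N: "\<And>k. k \<ge> N \<Longrightarrow> \<bar>d k\<bar> < e\<^sup>2 / 2"
    using LIMSEQ_D[OF d, of "e\<^sup>2 / 2"] by auto
  show "\<exists>N. \<forall>k\<ge>N. \<forall>l\<ge>N. norm (X k - X l) < e"
  proof (intro exI allI impI)
    fix k l assume "N \<le> k" "N \<le> l"
    then have "(norm (X k - X l))\<^sup>2 < e\<^sup>2" using le[of k l] N[of k] N[of l] by linarith
    then show "norm (X k - X l) < e" using \<open>0 < e\<close> by (simp add: power_less_imp_less_base)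
  qed
qed

lemma closed_convex_min_norm:
  fixes A :: "'a::{real_inner,complete_space} set"
  assumes "closed A" and "convex A" and "A \<noteq> {}"
  shows "\<exists>z\<in>A. \<forall>x\<in>A. norm z \<le> norm x"
proof -
  define D where "D = (INF x\<in>A. (norm x)\<^sup>2)"
  have bdd: "bdd_below ((\<lambda>x. (norm x)\<^sup>2) ` A)" by (auto intro: bdd_belowI[of _ 0])
  have D_le: "D \<le> (norm x)\<^sup>2" if "x \<in> A" for x
    unfolding D_def using bdd that by (rule cINF_lower)
  have "\<exists>x\<in>A. (norm x)\<^sup>2 < D + 1 / Suc k" for k
    using cINF_less_iff[OF assms(3) bdd, of "D + 1 / Suc k"] by (simp add: D_def[symmetric])
  then obtain X where X: "\<And>k. X k \<in> A" "\<And>k. (norm (X k))\<^sup>2 < D + 1 / Suc k" by metis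
  have "(norm (X k - X l))\<^sup>2 \<le> 2 / Suc k + 2 / Suc l" for k l
  proof -
    have "(1/2) *\<^sub>R X k + (1/2) *\<^sub>R X l \<in> A" by (rule convexD[OF assms(2) X(1) X(1)]) auto
    then have "4 * D \<le> (norm (X k + X l))\<^sup>2"
      using D_le by (fastforce simp: scaleR_right_distrib[symmetric] power_divide)
    moreover have "(norm (X k - X l))\<^sup>2 + (norm (X k + X l))\<^sup>2 = 2 * (norm (X k))\<^sup>2 + 2 * (norm (X l))\<^sup>2"
      by (simp add: power2_norm_eq_inner inner_diff inner_add inner_commute)
    ultimately show ?thesis using X(2)[of k] X(2)[of l] by linarith
  qed
  moreover have inverse_Suc: "(\<lambda>k. 1 / real (Suc k)) \<longlonglongrightarrow> 0"
    using LIMSEQ_inverse_real_of_nat by (simp add: inverse_eq_divide)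
  then have "(\<lambda>k. 2 / real (Suc k)) \<longlonglongrightarrow> 0"
    using tendsto_mult_right_zero[OF inverse_Suc, of 2] by simp
  ultimately have "Cauchy X" by (rule Cauchy_if_norm_diff_le)
  then obtain z where z: "X \<longlonglongrightarrow> z" by (auto simp: Cauchy_convergent_iff convergent_def)
  have "(norm z)\<^sup>2 \<le> D"
  proof (rule LIMSEQ_le)
    show "(\<lambda>k. (norm (X k))\<^sup>2) \<longlonglongrightarrow> (norm z)\<^sup>2" using z by (intro tendsto_intros)
    show "(\<lambda>k. D + 1 / real (Suc k)) \<longlonglongrightarrow> D"
      using tendsto_add[OF tendsto_const inverse_Suc] by simp
    show "\<exists>N. \<forall>k\<ge>N. (norm (X k))\<^sup>2 \<le> D + 1 / real (Suc k)" using X(2) less_imp_le by blast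
  qed
  moreover have "z \<in> A" using assms(1) X(1) z by (rule closed_sequentially)
  ultimately show ?thesis using D_le by (meson norm_ge_zero order_trans power2_le_imp_le)
qed

lemma decseq_if_increments_mono:
  fixes s :: "nat \<Rightarrow> real"
  assumes mono: "\<And>m. s (Suc m) - s m \<le> s (Suc (Suc m)) - s (Suc m)"
    and bounded: "\<And>m. s m \<le> c"
  shows "decseq s"
proof (rule decseq_SucI, rule ccontr)
  fix k assume "\<not> s (Suc k) \<le> s k"
  define d where "d = s (Suc k) - s k"
  have "0 < d" using \<open>\<not> s (Suc k) \<le> s k\<close> by (simp add: d_def)
  have increment: "d \<le> s (Suc (k + j)) - s (k + j)" for j
    unfolding d_def by (induction j) (auto intro: order_trans[OF _ mono])
  have growth: "s k + real j * d \<le> s (k + j)" for j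
  proof (induction j)
    case (Suc j)
    then show ?case using increment[of j] by (simp add: distrib_right)
  qed simp
  obtain j where "c - s k < real j * d" using ex_less_of_nat_mult[OF \<open>0 < d\<close>] by blast
  then show False using growth[of j] bounded[of "k + j"] by linarith
qed

section \<open>Adjoints and isometric embeddings\<close>

lemma inner_eq_0_if_norm_le_add_scaleR:
  fixes z v :: "'a::real_inner"
  assumes "\<And>t. norm z \<le> norm (z + t *\<^sub>R v)"
  shows "inner z v = 0"
proof (cases "v = 0")
  case False
  define t where "t = - inner z v / inner v v"
  have "inner z z \<le> inner (z + t *\<^sub>R v) (z + t *\<^sub>R v)" using assms[of t] by (simp only: norm_le)
  also have "\<dots> = inner z z + 2 * t * inner z v + t\<^sup>2 * inner v v"
    by (simp add: inner_commute power2_eq_square algebra_simps)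
  also have "\<dots> = inner z z - (inner z v)\<^sup>2 / inner v v"
    using False by (simp add: t_def field_simps power2_eq_square)
  finally have "(inner z v)\<^sup>2 / inner v v \<le> 0" by simp
  moreover have "0 < inner v v" using False by simp
  ultimately show ?thesis by (simp add: divide_le_0_iff)
qed simp

lemma riesz_representation:
  fixes f :: "'a::{real_inner,complete_space} \<Rightarrow> real"
  assumes "bounded_linear f"
  obtains z where "\<And>x. f x = inner z x"
proof (cases "\<forall>x. f x = 0")
  case True
  then show ?thesis using that[of 0] by simp
next
  case False
  interpret f: bounded_linear f by fact
  let ?A = "{x. f x = 1}"
  obtain x0 where "f x0 \<noteq> 0" using False by blast
  have "closed ?A"
    by (intro closed_Collect_eq continuous_on_const linear_continuous_on assms)
  moreover have "convex ?A"
    by (simp add: convex_def f.add f.scale)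
  moreover have "x0 /\<^sub>R f x0 \<in> ?A" using \<open>f x0 \<noteq> 0\<close> by (simp add: f.scale)
  then have "?A \<noteq> {}" by blast
  ultimately have "\<exists>z\<in>?A. \<forall>x\<in>?A. norm z \<le> norm x" by (rule closed_convex_min_norm)
  then obtain z where z: "f z = 1" and min: "\<And>x. f x = 1 \<Longrightarrow> norm z \<le> norm x" by blast
  have orth: "inner z v = 0" if "f v = 0" for v
    using that z by (intro inner_eq_0_if_norm_le_add_scaleR min) (simp add: f.add f.scale)
  have "f x = inner (z /\<^sub>R inner z z) x" for x
  proof -
    have "inner z (x - f x *\<^sub>R z) = 0" using z by (intro orth) (simp add: f.diff f.scale)
    moreover have "inner z z \<noteq> 0" using z by auto
    ultimately show ?thesis by (simp add: inner_diff_right)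
  qed
  then show ?thesis by (rule that)
qed

lemma adjoint_exists:
  fixes T :: "'a::{real_inner,complete_space} \<Rightarrow> 'b::real_inner"
  assumes "bounded_linear T"
  shows "\<exists>S. \<forall>x y. inner (T x) y = inner x (S y)"
proof -
  have "\<forall>y. \<exists>z. \<forall>x. inner (T x) y = inner x z"
  proof
    fix y
    obtain z where "\<And>x. inner (T x) y = inner z x"
      using riesz_representation[OF bounded_linear_inner_left_comp[OF assms]] by blast
    then show "\<exists>z. \<forall>x. inner (T x) y = inner x z" by (auto simp: inner_commute)
  qed
  then have "\<exists>S. \<forall>y x. inner (T x) y = inner x (S y)" by (rule choice)
  then show ?thesis by blast
qed

lemma inner_adj:
  fixes T :: "'a::{real_inner,complete_space} \<Rightarrow> 'a"
  assumes "bounded_linear T"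
  shows "inner (T x) y = inner x (adj T y)"
proof -
  obtain S where S: "\<And>x y. inner (T x) y = inner x (S y)" using adjoint_exists[OF assms] by blast
  have unique: "S' = S" if S': "\<forall>x y. inner (T x) y = inner x (S' y)" for S'
  proof (rule ext, rule vector_eq_ldot[THEN iffD1], rule allI)
    fix y x
    have "inner x (S' y) = inner (T x) y" using S' by simp
    also have "\<dots> = inner x (S y)" by (rule S)
    finally show "inner x (S' y) = inner x (S y)" .
  qed
  have "adj T = S"
    unfolding adj_def by (rule the_equality[OF _ unique]) (simp add: S)
  then show ?thesis by (simp add: S)
qed

lemma linear_if_adjoint:
  assumes "\<And>x y. inner (T x) y = inner x (S y)"
  shows "linear S"
proof (rule linearI)
  show "S (a + b) = S a + S b" for a b
    by (rule vector_eq_ldot[THEN iffD1]) (simp add: inner_add_right flip: assms)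
  show "S (c *\<^sub>R a) = c *\<^sub>R S a" for c a
    by (rule vector_eq_ldot[THEN iffD1]) (simp flip: assms)
qed

lemma oproj_eqI:
  assumes "subspace M" and "p \<in> M" and "\<And>m. m \<in> M \<Longrightarrow> inner (x - p) m = 0"
  shows "oproj M x = p"
  unfolding oproj_def
proof (rule the_equality)
  fix q assume q: "q \<in> M \<and> (\<forall>m\<in>M. inner (x - q) m = 0)"
  then have "p - q \<in> M" using assms(1,2) by (blast intro: subspace_diff)
  then have "inner (x - q) (p - q) - inner (x - p) (p - q) = 0" using assms(3) q by simp
  then have "inner (p - q) (p - q) = 0" by (simp add: inner_diff_left)
  then show "q = p" by simp
qed (use assms in blast)

locale isometric_embedding =
  fixes W :: "'h::real_inner \<Rightarrow> 'a::real_inner" and Ws :: "'a \<Rightarrow> 'h"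
  assumes bounded_linear_W: "bounded_linear W"
    and norm_W: "\<And>x. norm (W x) = norm x"
    and inner_W_Ws: "\<And>x y. inner (W x) y = inner x (Ws y)"
begin

lemma linear_W: "linear W"
  using bounded_linear_W by (rule bounded_linear.linear)

lemma linear_Ws: "linear Ws"
  using inner_W_Ws by (rule linear_if_adjoint)

lemma inner_W_W: "inner (W x) (W y) = inner x y"
  using linear_W norm_W by (rule inner_isometry)

lemma Ws_W: "Ws (W x) = x"
  by (rule vector_eq_ldot[THEN iffD1]) (simp add: inner_W_W flip: inner_W_Ws)

lemma inner_diff_W_Ws:
  "inner (y - W (Ws y)) (y - W (Ws y)) = inner y y - inner (Ws y) (Ws y)"
proof -
  have "inner y (W (Ws y)) = inner (W (Ws y)) (W (Ws y))"
    by (simp add: inner_W_W inner_commute flip: inner_W_Ws)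
  then show ?thesis by (simp add: inner_diff_self_of_projection inner_W_W)
qed

lemma inner_Ws_le: "inner (Ws y) (Ws y) \<le> inner y y"
  using inner_diff_W_Ws[of y] inner_ge_zero[of "y - W (Ws y)"] by linarith

lemma W_Ws_if_inner_le:
  assumes "inner y y \<le> inner (Ws y) (Ws y)"
  shows "W (Ws y) = y"
proof -
  have "inner (y - W (Ws y)) (y - W (Ws y)) = 0"
    using inner_diff_W_Ws[of y] inner_ge_zero[of "y - W (Ws y)"] assms by linarith
  then show ?thesis by simp
qed

lemma subspace_range_W: "subspace (range W)"
  using linear_W subspace_UNIV by (rule linear_subspace_image)

end

section \<open>Row isometries and spherical unitaries\<close>

locale row_isometry =
  fixes n :: nat and V :: "nat \<Rightarrow> 'a::{real_inner,complete_space} \<Rightarrow> 'a"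
  assumes bounded_linear_V: "\<And>i. i \<in> {1..n} \<Longrightarrow> bounded_linear (V i)"
    and norm_V: "\<And>i x. i \<in> {1..n} \<Longrightarrow> norm (V i x) = norm x"
    and inner_V_V_orthogonal:
      "\<And>i j x y. i \<in> {1..n} \<Longrightarrow> j \<in> {1..n} \<Longrightarrow> i \<noteq> j \<Longrightarrow> inner (V i x) (V j y) = 0"
begin

lemma inner_V_adj: "i \<in> {1..n} \<Longrightarrow> inner (V i x) y = inner x (adj (V i) y)"
  using bounded_linear_V by (rule inner_adj)

lemma linear_adj_V: "i \<in> {1..n} \<Longrightarrow> linear (adj (V i))"
  by (rule linear_if_adjoint) (rule inner_V_adj)

lemma inner_V_V: "i \<in> {1..n} \<Longrightarrow> inner (V i x) (V i y) = inner x y"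
  using bounded_linear_V[THEN bounded_linear.linear] norm_V by (rule inner_isometry)

lemma adj_V_V:
  assumes i: "i \<in> {1..n}" and j: "j \<in> {1..n}"
  shows "adj (V i) (V j x) = (if i = j then x else 0)"
proof -
  have "inner w (adj (V i) (V j x)) = inner (V i w) (V j x)" for w
    by (simp add: inner_V_adj[OF i])
  also have "inner (V i w) (V j x) = inner w (if i = j then x else 0)" for w
    using inner_V_V[OF i] inner_V_V_orthogonal[OF i j] by auto
  finally show ?thesis by (subst vector_eq_ldot[symmetric]) blast
qed

lemma inner_sum_V:
  "inner (\<Sum>i=1..n. V i (a i)) (\<Sum>j=1..n. V j (b j)) = (\<Sum>i=1..n. inner (a i) (b i))"
proof -
  have "inner (\<Sum>i=1..n. V i (a i)) (\<Sum>j=1..n. V j (b j))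
      = (\<Sum>j=1..n. \<Sum>i=1..n. inner (a i) (adj (V i) (V j (b j))))"
    by (simp add: inner_sum_left inner_sum_right inner_V_adj)
  also have "\<dots> = (\<Sum>i=1..n. inner (a i) (b i))"
    by (simp add: adj_V_V if_distrib cong: if_cong)
  finally show ?thesis .
qed

lemma sum_inner_adj_V_le: "(\<Sum>i=1..n. inner (adj (V i) y) (adj (V i) y)) \<le> inner y y"
proof -
  define z where "z = (\<Sum>i=1..n. V i (adj (V i) y))"
  have "inner z z = (\<Sum>i=1..n. inner (adj (V i) y) (adj (V i) y))"
    unfolding z_def by (rule inner_sum_V)
  moreover have "inner y z = inner z z"
    unfolding calculation unfolding z_def inner_sum_right
    by (intro sum.cong refl) (subst inner_commute, simp add: inner_V_adj)
  ultimately show ?thesis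
    using inner_diff_self_of_projection[of y z] inner_ge_zero[of "y - z"] by linarith
qed

end

locale spherical_unitary =
  fixes n :: nat and T :: "nat \<Rightarrow> 'h::{real_inner,complete_space} \<Rightarrow> 'h"
  assumes bounded_linear_T: "\<And>i. i \<in> {1..n} \<Longrightarrow> bounded_linear (T i)"
    and T_commute: "\<And>i j x. i \<in> {1..n} \<Longrightarrow> j \<in> {1..n} \<Longrightarrow> T i (T j x) = T j (T i x)"
    and T_normal: "\<And>i x. i \<in> {1..n} \<Longrightarrow> T i (adj (T i) x) = adj (T i) (T i x)"
    and sum_T_adj_T: "\<And>x. (\<Sum>i=1..n. T i (adj (T i) x)) = x"
begin

lemma inner_T_adj: "i \<in> {1..n} \<Longrightarrow> inner (T i x) y = inner x (adj (T i) y)"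
  using bounded_linear_T by (rule inner_adj)

lemma linear_T: "i \<in> {1..n} \<Longrightarrow> linear (T i)"
  using bounded_linear_T by (rule bounded_linear.linear)

lemma linear_adj_T: "i \<in> {1..n} \<Longrightarrow> linear (adj (T i))"
  by (rule linear_if_adjoint) (rule inner_T_adj)

lemma adj_T_commute:
  assumes i: "i \<in> {1..n}" and j: "j \<in> {1..n}"
  shows "adj (T i) (adj (T j) x) = adj (T j) (adj (T i) x)"
proof -
  have "inner w (adj (T i) (adj (T j) x)) = inner w (adj (T j) (adj (T i) x))" for w
    using T_commute[OF i j] by (simp flip: inner_T_adj[OF i] inner_T_adj[OF j])
  then show ?thesis by (subst vector_eq_ldot[symmetric]) blast
qed

lemma sum_adj_T_T: "(\<Sum>i=1..n. adj (T i) (T i x)) = x"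
  using sum_T_adj_T[of x] by (simp add: T_normal)

lemma sum_inner_adj_T: "(\<Sum>i=1..n. inner (adj (T i) x) (adj (T i) x)) = inner x x"
proof -
  have "(\<Sum>i=1..n. inner (adj (T i) x) (adj (T i) x)) = inner (\<Sum>i=1..n. T i (adj (T i) x)) x"
    by (simp add: inner_sum_left inner_T_adj)
  then show ?thesis by (simp only: sum_T_adj_T)
qed

lemma sum_inner_T: "(\<Sum>i=1..n. inner (T i x) (T i x)) = inner x x"
proof -
  have "(\<Sum>i=1..n. inner (T i x) (T i x)) = inner x (\<Sum>i=1..n. adj (T i) (T i x))"
    by (simp add: inner_sum_right inner_T_adj)
  then show ?thesis by (simp only: sum_adj_T_T)
qed

lemma sum_sum_inner_adj_T_T:
  "(\<Sum>i=1..n. \<Sum>j=1..n. inner (adj (T i) (T j x)) (adj (T i) (T j x))) = inner x x"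
  by (subst sum.swap) (simp only: sum_inner_adj_T sum_inner_T)

lemma sum_sum_inner_T_adj_T:
  "(\<Sum>i=1..n. \<Sum>j=1..n. inner (T j (adj (T i) x)) (T j (adj (T i) x))) = inner x x"
  by (simp only: sum_inner_adj_T sum_inner_T)

lemma sum_sum_inner_adj_T_T_T_adj_T:
  "(\<Sum>i=1..n. \<Sum>j=1..n. inner (adj (T i) (T j x)) (T j (adj (T i) x))) = inner x x"
proof -
  have "inner (adj (T i) (T j x)) (T j (adj (T i) x)) = inner (T i (adj (T i) x)) (adj (T j) (T j x))"
    if i: "i \<in> {1..n}" and j: "j \<in> {1..n}" for i j
  proof -
    have "inner (adj (T i) (T j x)) (T j (adj (T i) x)) = inner (T j (adj (T i) x)) (adj (T i) (T j x))"
      by (rule inner_commute)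
    also have "\<dots> = inner (adj (T i) x) (adj (T i) (adj (T j) (T j x)))"
      by (simp add: inner_T_adj[OF j] adj_T_commute[OF i j])
    also have "\<dots> = inner (T i (adj (T i) x)) (adj (T j) (T j x))"
      by (rule inner_T_adj[OF i, symmetric])
    finally show ?thesis .
  qed
  then have "(\<Sum>i=1..n. \<Sum>j=1..n. inner (adj (T i) (T j x)) (T j (adj (T i) x)))
      = (\<Sum>i=1..n. \<Sum>j=1..n. inner (T i (adj (T i) x)) (adj (T j) (T j x)))"
    by (intro sum.cong refl) simp
  also have "\<dots> = inner (\<Sum>i=1..n. T i (adj (T i) x)) (\<Sum>j=1..n. adj (T j) (T j x))"
    by (simp only: inner_sum_left inner_sum_right) (rule sum.swap)
  finally show ?thesis by (simp only: sum_T_adj_T sum_adj_T_T)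
qed

text \<open>The families (T_i* T_j x) and (T_j T_i* x) both have total square norm |x|^2 and total
  inner product |x|^2, so they coincide.\<close>

lemma adj_T_T:
  assumes "i \<in> {1..n}" and "j \<in> {1..n}"
  shows "adj (T i) (T j x) = T j (adj (T i) x)"
  using _ _ assms sum_sum_inner_adj_T_T sum_sum_inner_T_adj_T sum_sum_inner_adj_T_T_T_adj_T
  by (rule eq_if_double_sum_inner_eq) simp_all

lemma row_defect_eq:
  "(\<Sum>j=1..n. inner (k j - adj (T j) (\<Sum>i=1..n. T i (k i))) (k j - adj (T j) (\<Sum>i=1..n. T i (k i))))
    = (\<Sum>j=1..n. inner (k j) (k j)) - inner (\<Sum>i=1..n. T i (k i)) (\<Sum>i=1..n. T i (k i))"
proof -
  define e where "e = (\<Sum>i=1..n. T i (k i))"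
  have "(\<Sum>j=1..n. inner (k j) (adj (T j) e)) = inner e e"
    by (simp add: e_def inner_sum_left flip: inner_T_adj)
  then show ?thesis
    using sum_inner_diff_self[of k "\<lambda>j. adj (T j) e" "{1..n}"] sum_inner_adj_T[of e]
    by (simp add: e_def)
qed

lemma row_contraction:
  "inner (\<Sum>i=1..n. T i (k i)) (\<Sum>i=1..n. T i (k i)) \<le> (\<Sum>j=1..n. inner (k j) (k j))"
  using row_defect_eq[of k] sum_nonneg[of "{1..n}"
      "\<lambda>j. inner (k j - adj (T j) (\<Sum>i=1..n. T i (k i))) (k j - adj (T j) (\<Sum>i=1..n. T i (k i)))"]
  by simp

text \<open>Both sides are defects of the coisometric row (T_1, ..., T_n): the left one that of G, the right
  one the sum of those of the g j. The symmetry of k together with T_i* T_j = T_j T_i* turns the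
  defect vectors of G into row images of the defect vectors of the g j.\<close>

lemma defect_increment_le:
  fixes G :: 'h and g :: "nat \<Rightarrow> 'h" and k :: "nat \<Rightarrow> nat \<Rightarrow> 'h"
  assumes G: "G = (\<Sum>j=1..n. T j (g j))"
    and g: "\<And>j. j \<in> {1..n} \<Longrightarrow> g j = (\<Sum>i=1..n. T i (k i j))"
    and k_sym: "\<And>i j. i \<in> {1..n} \<Longrightarrow> j \<in> {1..n} \<Longrightarrow> k i j = k j i"
  shows "(\<Sum>j=1..n. inner (g j) (g j)) - inner G G
    \<le> (\<Sum>j=1..n. \<Sum>i=1..n. inner (k i j) (k i j)) - (\<Sum>j=1..n. inner (g j) (g j))"
proof -
  define d where "d i j = k i j - adj (T i) (g j)" for i j
  define e where "e i = g i - adj (T i) G" for i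
  have e_defect: "(\<Sum>i=1..n. inner (e i) (e i)) = (\<Sum>i=1..n. inner (g i) (g i)) - inner G G"
    using row_defect_eq[of g] by (simp add: e_def G)
  have d_defect: "(\<Sum>i=1..n. inner (d i j) (d i j)) = (\<Sum>i=1..n. inner (k i j) (k i j)) - inner (g j) (g j)"
    if "j \<in> {1..n}" for j
    using row_defect_eq[of "\<lambda>i. k i j"] by (simp add: d_def g[OF that])
  have "(\<Sum>i=1..n. inner (e i) (e i)) \<le> (\<Sum>i=1..n. \<Sum>j=1..n. inner (d i j) (d i j))"
  proof (rule sum_mono)
    fix i assume i: "i \<in> {1..n}"
    have "(\<Sum>j=1..n. T j (d i j)) = (\<Sum>j=1..n. T j (k j i) - adj (T i) (T j (g j)))"
      using i by (intro sum.cong refl) (simp add: d_def linear_diff[OF linear_T] k_sym adj_T_T)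
    also have "\<dots> = e i"
      by (simp add: sum_subtractf e_def g[OF i] G linear_sum[OF linear_adj_T[OF i]])
    finally show "inner (e i) (e i) \<le> (\<Sum>j=1..n. inner (d i j) (d i j))"
      using row_contraction[of "d i"] by simp
  qed
  also have "\<dots> = (\<Sum>j=1..n. \<Sum>i=1..n. inner (d i j) (d i j))"
    by (rule sum.swap)
  also have "\<dots> = (\<Sum>j=1..n. (\<Sum>i=1..n. inner (k i j) (k i j)) - inner (g j) (g j))"
    by (intro sum.cong refl) (rule d_defect)
  finally show ?thesis using e_defect by (simp add: sum_subtractf)
qed

end

section \<open>Isometric dilations\<close>

locale isometric_dilation =
  spherical_unitary n T + row_isometry n V + isometric_embedding W Ws
  for n :: nat and T :: "nat \<Rightarrow> 'h::{real_inner,complete_space} \<Rightarrow> 'h"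
    and V :: "nat \<Rightarrow> 'a::{real_inner,complete_space} \<Rightarrow> 'a" and W :: "'h \<Rightarrow> 'a" and Ws +
  assumes adj_V_W: "\<And>i h. i \<in> {1..n} \<Longrightarrow> adj (V i) (W h) = W (adj (T i) h)"
begin

lemma closed_range_W: "closed (range W)"
  using complete_isometric_image[of 1 UNIV W] bounded_linear_W norm_W
  by (simp add: complete_UNIV complete_eq_closed)

lemma oproj_range_W_V_W:
  assumes i: "i \<in> {1..n}"
  shows "oproj (range W) (V i (W h)) = W (T i h)"
proof (rule oproj_eqI[OF subspace_range_W rangeI])
  fix m assume "m \<in> range W"
  then obtain k where "m = W k" by blast
  moreover have "inner (V i (W h)) (W k) = inner (W (T i h)) (W k)"
    by (simp add: inner_V_adj[OF i] adj_V_W[OF i] inner_W_W inner_T_adj[OF i])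
  ultimately show "inner (V i (W h) - W (T i h)) m = 0" by (simp add: inner_diff_left)
qed

lemma W_eq_sum_V: "W h = (\<Sum>i=1..n. V i (W (adj (T i) h)))"
proof (rule eq_if_inner_eq)
  show "inner (W h) (W h) = inner h h" by (rule inner_W_W)
  show "inner (\<Sum>i=1..n. V i (W (adj (T i) h))) (\<Sum>i=1..n. V i (W (adj (T i) h))) = inner h h"
    by (simp only: inner_sum_V inner_W_W sum_inner_adj_T)
  have "inner (W h) (V i (W (adj (T i) h))) = inner (adj (T i) h) (adj (T i) h)" if "i \<in> {1..n}" for i
    using that by (subst inner_commute) (simp add: inner_V_adj adj_V_W inner_W_W)
  then have "inner (W h) (\<Sum>i=1..n. V i (W (adj (T i) h))) = (\<Sum>i=1..n. inner (adj (T i) h) (adj (T i) h))"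
    by (simp add: inner_sum_right)
  also have "\<dots> = inner h h" by (rule sum_inner_adj_T)
  finally show "inner (W h) (\<Sum>i=1..n. V i (W (adj (T i) h))) = inner h h" .
qed

lemma Ws_eq_sum_T: "Ws x = (\<Sum>i=1..n. T i (Ws (adj (V i) x)))"
proof -
  have "inner h (T i (Ws (adj (V i) x))) = inner (V i (W (adj (T i) h))) x"
    if i: "i \<in> {1..n}" for i h
  proof -
    have "inner h (T i (Ws (adj (V i) x))) = inner (adj (T i) h) (Ws (adj (V i) x))"
      by (metis inner_commute inner_T_adj[OF i])
    also have "\<dots> = inner (V i (W (adj (T i) h))) x"
      by (simp add: inner_V_adj[OF i] flip: inner_W_Ws)
    finally show ?thesis .
  qed
  then have "inner h (\<Sum>i=1..n. T i (Ws (adj (V i) x))) = inner (\<Sum>i=1..n. V i (W (adj (T i) h))) x"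
    for h by (simp add: inner_sum_left inner_sum_right)
  then have "inner h (Ws x) = inner h (\<Sum>i=1..n. T i (Ws (adj (V i) x)))" for h
    by (simp only: W_eq_sum_V[symmetric] inner_W_Ws[symmetric])
  then show ?thesis by (subst vector_eq_ldot[symmetric]) blast
qed

text \<open>word_form m x y is the sum of inner (Ws (V_\<alpha>* x)) (Ws (V_\<alpha>* y)) over the words \<alpha> of length m.\<close>

primrec word_form :: "nat \<Rightarrow> 'a \<Rightarrow> 'a \<Rightarrow> real" where
  "word_form 0 x y = inner (Ws x) (Ws y)"
| "word_form (Suc m) x y = (\<Sum>i=1..n. word_form m (adj (V i) x) (adj (V i) y))"

lemma linear_word_form: "linear (\<lambda>x. word_form m x z)"
proof (induction m arbitrary: z)
  case 0
  show ?case
    using linear_compose[OF linear_Ws bounded_linear_inner_left[THEN bounded_linear.linear]]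
    by (simp add: o_def)
next
  case (Suc m)
  have "linear ((\<lambda>x. word_form m x (adj (V i) z)) \<circ> adj (V i))" if "i \<in> {1..n}" for i
    using linear_adj_V[OF that] Suc.IH by (rule linear_compose)
  then show ?case by (simp add: o_def linear_compose_sum)
qed

lemma word_form_commute: "word_form m x y = word_form m y x"
  by (induction m arbitrary: x y) (simp_all add: inner_commute)

lemma word_form_bounds: "0 \<le> word_form m x x \<and> word_form m x x \<le> inner x x"
proof (induction m arbitrary: x)
  case 0
  show ?case using inner_Ws_le[of x] by simp
next
  case (Suc m)
  have "word_form (Suc m) x x \<le> (\<Sum>i=1..n. inner (adj (V i) x) (adj (V i) x))"
    using Suc.IH by (auto intro: sum_mono)
  also have "\<dots> \<le> inner x x" by (rule sum_inner_adj_V_le)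
  finally show ?case using Suc.IH by (auto intro: sum_nonneg)
qed

lemma word_form_W: "word_form m (W h) z = inner (W h) z"
proof (induction m arbitrary: h z)
  case 0
  show ?case by (simp add: Ws_W inner_W_Ws)
next
  case (Suc m)
  have "word_form (Suc m) (W h) z = (\<Sum>i=1..n. inner (V i (W (adj (T i) h))) z)"
    by (simp add: adj_V_W Suc.IH inner_V_adj)
  also have "\<dots> = inner (W h) z" by (simp only: inner_sum_left[symmetric] W_eq_sum_V[symmetric])
  finally show ?case .
qed

lemma word_form_opword:
  "set \<alpha> \<subseteq> {1..n} \<Longrightarrow> length \<alpha> \<le> m
    \<Longrightarrow> word_form m (opword V \<alpha> (W h)) z = inner (opword V \<alpha> (W h)) z"
proof (induction \<alpha> arbitrary: m z)
  case Nil
  then show ?case by (simp add: word_form_W)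
next
  case (Cons j \<alpha>)
  then obtain m' where m: "m = Suc m'" and "length \<alpha> \<le> m'" by (cases m) auto
  have j: "j \<in> {1..n}" and "set \<alpha> \<subseteq> {1..n}" using Cons.prems by auto
  define u where "u = opword V \<alpha> (W h)"
  have "word_form m (V j u) z = (\<Sum>i=1..n. word_form m' (adj (V i) (V j u)) (adj (V i) z))"
    by (simp only: m word_form.simps)
  also have "\<dots> = (\<Sum>i=1..n. if i = j then word_form m' u (adj (V j) z) else 0)"
    by (intro sum.cong refl) (simp add: adj_V_V[OF _ j] linear_0[OF linear_word_form])
  also have "\<dots> = word_form m' u (adj (V j) z)" using j by simp
  also have "\<dots> = inner u (adj (V j) z)"
    unfolding u_def using Cons.IH[OF \<open>set \<alpha> \<subseteq> {1..n}\<close> \<open>length \<alpha> \<le> m'\<close>] .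
  also have "\<dots> = inner (V j u) z" by (simp add: inner_V_adj[OF j])
  finally show ?case by (simp add: u_def)
qed

lemma eventually_word_form_eq_inner:
  assumes "u \<in> span {opword V \<alpha> (W h) | \<alpha> h. set \<alpha> \<subseteq> {1..n}}"
  shows "\<forall>\<^sub>F m in sequentially. \<forall>z. word_form m u z = inner u z"
  using assms
proof (induction rule: span_induct_alt)
  case base
  show ?case using linear_0[OF linear_word_form] by simp
next
  case (step c x y)
  then obtain \<alpha> h where "x = opword V \<alpha> (W h)" and "set \<alpha> \<subseteq> {1..n}" by blast
  then have "\<forall>\<^sub>F m in sequentially. \<forall>z. word_form m x z = inner x z"
    unfolding eventually_sequentially using word_form_opword by blast
  with step.IH show ?case
    by eventually_elim (simp add: linear_add[OF linear_word_form] linear_scale[OF linear_word_form]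
        inner_add_left)
qed

context
  fixes L :: "'a set"
  assumes adj_V_L: "\<And>i y. i \<in> {1..n} \<Longrightarrow> y \<in> L \<Longrightarrow> adj (V i) y \<in> L"
    and adj_V_commute_L: "\<And>i j y. i \<in> {1..n} \<Longrightarrow> j \<in> {1..n} \<Longrightarrow> y \<in> L
      \<Longrightarrow> adj (V i) (adj (V j) y) = adj (V j) (adj (V i) y)"
begin

lemma word_form_increment_mono:
  "y \<in> L \<Longrightarrow> word_form (Suc m) y y - word_form m y y
    \<le> word_form (Suc (Suc m)) y y - word_form (Suc m) y y"
proof (induction m arbitrary: y)
  case 0
  have "Ws (adj (V i) (adj (V j) y)) = Ws (adj (V j) (adj (V i) y))"
    if "i \<in> {1..n}" "j \<in> {1..n}" for i j
    using adj_V_commute_L[OF that 0] by simp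
  then show ?case
    using defect_increment_le[of "Ws y" "\<lambda>j. Ws (adj (V j) y)" "\<lambda>i j. Ws (adj (V i) (adj (V j) y))"]
    by (simp add: Ws_eq_sum_T[of y] Ws_eq_sum_T[of "adj (V _) y"])
next
  case (Suc m)
  have "word_form (Suc (Suc m)) y y - word_form (Suc m) y y
      = (\<Sum>i=1..n. word_form (Suc m) (adj (V i) y) (adj (V i) y) - word_form m (adj (V i) y) (adj (V i) y))"
    by (simp only: word_form.simps(2) sum_subtractf)
  also have "\<dots> \<le> (\<Sum>i=1..n. word_form (Suc (Suc m)) (adj (V i) y) (adj (V i) y)
      - word_form (Suc m) (adj (V i) y) (adj (V i) y))"
    by (intro sum_mono Suc.IH adj_V_L Suc.prems)
  also have "\<dots> = word_form (Suc (Suc (Suc m))) y y - word_form (Suc (Suc m)) y y"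
    by (simp only: word_form.simps(2) sum_subtractf)
  finally show ?case .
qed

lemma word_form_le_word_form_0:
  assumes "y \<in> L"
  shows "word_form m y y \<le> word_form 0 y y"
proof -
  have "decseq (\<lambda>m. word_form m y y)"
  proof (rule decseq_if_increments_mono)
    show "word_form (Suc m) y y - word_form m y y \<le> word_form (Suc (Suc m)) y y - word_form (Suc m) y y"
      for m using assms by (rule word_form_increment_mono)
    show "word_form m y y \<le> inner y y" for m using word_form_bounds by blast
  qed
  then show ?thesis using decseqD[of _ 0 m] by blast
qed

end

end

locale minimal_isometric_dilation = isometric_dilation +
  assumes dense_words: "closure (span {opword V \<alpha> (W h) | \<alpha> h. set \<alpha> \<subseteq> {1..n}}) = UNIV"
begin

lemma inner_less_word_form_add:
  assumes "0 < e"
  obtains M where "inner y y < word_form M y y + e"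
proof -
  have "y \<in> closure (span {opword V \<alpha> (W h) | \<alpha> h. set \<alpha> \<subseteq> {1..n}})"
    using dense_words by simp
  then have "\<exists>u\<in>span {opword V \<alpha> (W h) | \<alpha> h. set \<alpha> \<subseteq> {1..n}}. dist u y < sqrt e"
    unfolding closure_approachable using assms by simp
  then obtain u where u: "u \<in> span {opword V \<alpha> (W h) | \<alpha> h. set \<alpha> \<subseteq> {1..n}}"
    and "dist u y < sqrt e" by blast
  then have "(norm (y - u))\<^sup>2 < (sqrt e)\<^sup>2"
    by (intro power_strict_mono) (auto simp: dist_norm norm_minus_commute)
  then have close: "inner (y - u) (y - u) < e"
    using assms by (simp add: power2_norm_eq_inner)
  obtain M where M: "\<And>z. word_form M u z = inner u z"
    using eventually_word_form_eq_inner[OF u] by (auto simp: eventually_sequentially)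
  have "word_form M (y - u) (y - u) = word_form M y (y - u) - inner u (y - u)"
    by (simp add: linear_diff[OF linear_word_form] M)
  also have "word_form M y (y - u) = word_form M (y - u) y"
    by (rule word_form_commute)
  also have "\<dots> = word_form M y y - inner u y"
    by (simp add: linear_diff[OF linear_word_form] M)
  finally have "inner y y - word_form M y y = inner (y - u) (y - u) - word_form M (y - u) (y - u)"
    by (simp add: inner_diff inner_commute)
  then have "inner y y - word_form M y y < e"
    using close word_form_bounds[of M "y - u"] by linarith
  then show ?thesis by (intro that[of M]) simp
qed

lemma subset_range_W:
  assumes "\<And>i y. i \<in> {1..n} \<Longrightarrow> y \<in> L \<Longrightarrow> adj (V i) y \<in> L"
    and "\<And>i j y. i \<in> {1..n} \<Longrightarrow> j \<in> {1..n} \<Longrightarrow> y \<in> L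
      \<Longrightarrow> adj (V i) (adj (V j) y) = adj (V j) (adj (V i) y)"
  shows "L \<subseteq> range W"
proof
  fix y assume "y \<in> L"
  have "inner y y \<le> inner (Ws y) (Ws y)"
  proof (rule field_le_epsilon)
    fix e :: real assume "0 < e"
    then obtain M where "inner y y < word_form M y y + e" by (rule inner_less_word_form_add)
    moreover have "word_form M y y \<le> word_form 0 y y"
      using assms \<open>y \<in> L\<close> by (rule word_form_le_word_form_0)
    ultimately show "inner y y \<le> inner (Ws y) (Ws y) + e" by simp
  qed
  then show "y \<in> range W" by (metis W_Ws_if_inner_le rangeI)
qed

lemma max_comm_space_eq_range_W:
  assumes "\<And>x. W (Jh x) = Ja (W x)"
  shows "max_comm_space Ja V n = range W"
  unfolding max_comm_space_def
proof (rule Greatest_equality)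
  show "comm_inv Ja V n (range W)"
    unfolding comm_inv_def
  proof (intro conjI ballI subspace_range_W closed_range_W)
    show "Ja ` range W \<subseteq> range W" by (auto simp flip: assms)
    show "adj (V i) ` range W \<subseteq> range W" if "i \<in> {1..n}" for i
      using that by (auto simp: adj_V_W)
    show "adj (V i) (adj (V j) y) = adj (V j) (adj (V i) y)"
      if "i \<in> {1..n}" "j \<in> {1..n}" "y \<in> range W" for i j y
      using that by (auto simp: adj_V_W adj_T_commute)
  qed
  show "L \<subseteq> range W" if "comm_inv Ja V n L" for L
    using that unfolding comm_inv_def by (intro subset_range_W) blast+
qed

end

theorem theorem15:
  fixes n :: nat
    and Jh :: "'h::{real_inner, complete_space} \<Rightarrow> 'h"
    and Ja :: "'a::{real_inner, complete_space} \<Rightarrow> 'a"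
    and T :: "nat \<Rightarrow> 'h \<Rightarrow> 'h"
    and V :: "nat \<Rightarrow> 'a \<Rightarrow> 'a"
    and W :: "'h \<Rightarrow> 'a"
  assumes cJh: "cstruct Jh" and cJa: "cstruct Ja"
    \<comment> \<open>T is a spherical unitary on H\<close>
    and T_bdd: "\<forall>i\<in>{1..n}. cbounded Jh Jh (T i)"
    and T_comm: "\<forall>i\<in>{1..n}. \<forall>j\<in>{1..n}. T i \<circ> T j = T j \<circ> T i"
    and T_normal: "\<forall>i\<in>{1..n}. T i \<circ> adj (T i) = adj (T i) \<circ> T i"
    and T_sph: "\<forall>x. (\<Sum>i=1..n. T i (adj (T i) x)) = x"
    \<comment> \<open>H is embedded in H~ by the complex-linear isometry W\<close>
    and W_bdd: "cbounded Jh Ja W"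
    and W_isom: "\<forall>x. norm (W x) = norm x"
    \<comment> \<open>V~ is the minimal isometric dilation of T\<close>
    and V_bdd: "\<forall>i\<in>{1..n}. cbounded Ja Ja (V i)"
    and V_isom: "\<forall>i\<in>{1..n}. \<forall>x. norm (V i x) = norm x"
    and V_orth: "\<forall>i\<in>{1..n}. \<forall>j\<in>{1..n}. i \<noteq> j \<longrightarrow> (\<forall>x y. inner (V i x) (V j y) = 0)"
    and V_dil: "\<forall>i\<in>{1..n}. \<forall>h. adj (V i) (W h) = W (adj (T i) h)"
    and V_min: "closure (span {opword V \<alpha> (W h) | \<alpha> h. set \<alpha> \<subseteq> {1..n}}) = UNIV"
  shows "max_comm_space Ja V n = range W
    \<and> (\<forall>i\<in>{1..n}. \<forall>h. oproj (range W) (V i (W h)) = W (T i h))"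
proof -
  have "bounded_linear W" using W_bdd by (simp add: cbounded_def)
  then obtain Ws where "\<And>x y. inner (W x) y = inner x (Ws y)" using adjoint_exists by blast
  interpret minimal_isometric_dilation n T V W Ws
  proof (intro minimal_isometric_dilation.intro minimal_isometric_dilation_axioms.intro
      isometric_dilation.intro isometric_dilation_axioms.intro spherical_unitary.intro
      row_isometry.intro isometric_embedding.intro)
    show "bounded_linear (T i)" if "i \<in> {1..n}" for i
      using T_bdd that by (simp add: cbounded_def)
    show "bounded_linear (V i)" if "i \<in> {1..n}" for i
      using V_bdd that by (simp add: cbounded_def)
    show "T i (T j x) = T j (T i x)" if "i \<in> {1..n}" "j \<in> {1..n}" for i j x
      using T_comm that by (simp add: fun_eq_iff)
    show "T i (adj (T i) x) = adj (T i) (T i x)" if "i \<in> {1..n}" for i x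
      using T_normal that by (simp add: fun_eq_iff)
  qed (use T_sph \<open>bounded_linear W\<close> W_isom V_isom V_orth V_dil V_min
      \<open>\<And>x y. inner (W x) y = inner x (Ws y)\<close> in auto)
  have "\<And>x. W (Jh x) = Ja (W x)" using W_bdd by (simp add: cbounded_def)
  then show ?thesis using max_comm_space_eq_range_W oproj_range_W_V_W by blast
qed

end
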